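(* Fix $d,N\ge1$, scenarios $r^{(1)},\dots,r^{(N)}\in\mathbb{R}^d$, $\alpha\in(0,1)$, $\lambda_\mu\ge0$, $\gamma>0$, bounds $\boldsymbol{\ell}\le\boldsymbol{u}$ in $\mathbb{R}^d$, $w_{\mathrm{prev}}\in\mathbb{R}^d$ and $\tau\ge0$ such that the feasible set $\mathcal{W}=\{w\in\mathbb{R}^d:\mathbf{1}^\top w=1,\ \boldsymbol{\ell}\le w\le\boldsymbol{u},\ \|w-w_{\mathrm{prev}}\|_1\le\tau\}$ is nonempty. For $\mu\in\mathbb{R}^d$ and symmetric $\Sigma\succeq0$ define \[ F(w;\mu,\Sigma)=-\lambda_\mu\mu^\top w+\gamma\,w^\top\Sigma w+\min_{\zeta\in\mathbb{R}}\Big\{\zeta+\frac{1}{(1-\alpha)N}\sum_{i=1}^N\big(-w^\top r^{(i)}-\zeta\big)_+\Big\}, \] and let $\hat w(\mu,\Sigma)$ denote a minimizer of $F(\cdot;\mu,\Sigma)$ over $\mathcal{W}$. Let $\hat\mu\in\mathbb{R}^d$ and symmetric $\hat\Sigma\succeq\lambda_{\min}I$ with $\lambda_{\min}>0$. Then there exist constants $c_\mu,c_\Sigma\ge0$ such that for all $\delta\mu\in\mathbb{R}^d$ and all symmetric $\delta\Sigma$ with $\hat\Sigma+\delta\Sigma\succeq0$, \[ \|\hat w(\hat\mu+\delta\mu,\hat\Sigma+\delta\Sigma)-\hat w(\hat\mu,\hat\Sigma)\|_2\le\frac{c_\mu\|\delta\mu\|_2+c_\Sigma\|\delta\Sigma\|_{\mathrm{op}}}{\lambda_{\min}}.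 \]
   Context: This is the CVaR epigraph quadratic program of a portfolio allocator at level $\alpha$ (portfolio loss $-w^\top r$), with budget, box and $\ell_1$ turnover constraints; $\|\cdot\|_{\mathrm{op}}$ is the spectral norm. The constraint data $(\mathcal{W}$, scenarios, $\alpha,\lambda_\mu,\gamma)$ are held fixed while $(\mu,\Sigma)$ are perturbed. *)

theory Defs
  imports "HOL-Analysis.Analysis"
begin

definition feasible_set ::
  "real^'d \<Rightarrow> real^'d \<Rightarrow> real^'d \<Rightarrow> real \<Rightarrow> (real^'d) set" where
  "feasible_set l u wprev tau =
     {w. (\<Sum>i\<in>UNIV. w $ i) = 1 \<and> (\<forall>i. l $ i \<le> w $ i \<and> w $ i \<le> u $ i)
         \<and> (\<Sum>i\<in>UNIV. \<bar>w $ i - wprev $ i\<bar>) \<le> tau}"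

definition pos_part :: "real \<Rightarrow> real" where
  "pos_part x = max x 0"

text \<open>CVaR term (Rockafellar-Uryasev): the minimum over zeta, written as infimum
  (the minimum is attained). Scenarios indexed by a finite type 'n, N = CARD('n).\<close>
definition cvar_term :: "real \<Rightarrow> ('n::finite \<Rightarrow> real^'d) \<Rightarrow> real^'d \<Rightarrow> real" where
  "cvar_term alpha r w =
     (INF zeta. zeta + (1 / ((1 - alpha) * real CARD('n))) *
        (\<Sum>i\<in>UNIV. pos_part (- (w \<bullet> r i) - zeta)))"

definition objF ::
  "real \<Rightarrow> real \<Rightarrow> real \<Rightarrow> ('n::finite \<Rightarrow> real^'d) \<Rightarrow> real^'d \<Rightarrow> real^'d^'d \<Rightarrow> real^'d \<Rightarrow> real" where
  "objF lam_mu gamma alpha r mu S w =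
     - lam_mu * (mu \<bullet> w) + gamma * (w \<bullet> (S *v w)) + cvar_term alpha r w"

definition sym_mat :: "real^'d^'d \<Rightarrow> bool" where
  "sym_mat A \<longleftrightarrow> transpose A = A"

definition psd_ge :: "real^'d^'d \<Rightarrow> real \<Rightarrow> bool" where
  "psd_ge A c \<longleftrightarrow> (\<forall>x. c * (x \<bullet> x) \<le> x \<bullet> (A *v x))"

definition is_minimizer_on :: "(real^'d \<Rightarrow> real) \<Rightarrow> (real^'d) set \<Rightarrow> real^'d \<Rightarrow> bool" where
  "is_minimizer_on f S w \<longleftrightarrow> w \<in> S \<and> (\<forall>v\<in>S. f w \<le> f v)"

definition op_norm :: "real^'d^'d \<Rightarrow> real" where
  "op_norm A = onorm (\<lambda>x. A *v x)"

end

(*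
  The objective is strongly convex with modulus 2 gamma lam_min: the quadratic term is, the
  linear term is convex, and the CVaR term is convex as the infimum over zeta of the jointly
  convex Rockafellar-Uryasev function. For an m-strongly convex function the value at any other
  feasible point exceeds the minimum by at least m |v - w|^2 / 4. Adding this inequality for the
  unperturbed minimizer w0 to the plain minimality of the perturbed minimizer w1 bounds
  m |w1 - w0|^2 / 4 by the change of the perturbation -lam_mu dmu.w + gamma w.dSigma w between
  w0 and w1. On the bounded feasible set that change is at most
  (lam_mu |dmu| + 2 gamma B |dSigma|_op) |w1 - w0|, B bounding the norm of feasible points.
*)
theory Submission
  imports Defs
begin

definition strongly_convex_on :: "'a::real_inner set \<Rightarrow> real \<Rightarrow> ('a \<Rightarrow> real) \<Rightarrow> bool" where
  "strongly_convex_on D m F \<longleftrightarrow> convex_on D (\<lambda>x. F x - m / 2 * (norm x)\<^sup>2)"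

lemma strongly_convex_on_subset:
  "strongly_convex_on T m F \<Longrightarrow> S \<subseteq> T \<Longrightarrow> convex S \<Longrightarrow> strongly_convex_on S m F"
  unfolding strongly_convex_on_def by (rule convex_on_subset)

lemma strongly_convex_on_add_convex:
  assumes "strongly_convex_on D m F" "convex_on D G"
  shows "strongly_convex_on D m (\<lambda>x. F x + G x)"
proof -
  have "convex_on D (\<lambda>x. (F x - m / 2 * (norm x)\<^sup>2) + G x)"
    using assms unfolding strongly_convex_on_def by (rule convex_on_add)
  then show ?thesis
    unfolding strongly_convex_on_def by (simp add: algebra_simps)
qed

lemma strongly_convex_on_cmul:
  assumes "0 \<le> c" "strongly_convex_on D m F"
  shows "strongly_convex_on D (c * m) (\<lambda>x. c * F x)"
proof -
  have "convex_on D (\<lambda>x. c * (F x - m / 2 * (norm x)\<^sup>2))"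
    using assms unfolding strongly_convex_on_def by (rule convex_on_cmul)
  then show ?thesis
    unfolding strongly_convex_on_def by (simp add: algebra_simps)
qed

lemma strongly_convex_on_midpoint:
  assumes "strongly_convex_on D m F" "a \<in> D" "b \<in> D"
  shows "F ((1/2) *\<^sub>R (a + b)) \<le> (F a + F b) / 2 - m * (norm (b - a))\<^sup>2 / 8"
proof -
  define c where "c = (1/2) *\<^sub>R (a + b)"
  have norm_c: "(norm c)\<^sup>2 = ((norm a)\<^sup>2 + (norm b)\<^sup>2) / 2 - (norm (b - a))\<^sup>2 / 4"
    unfolding c_def
    by (simp add: power2_norm_eq_inner inner_add_left inner_add_right inner_diff_left
        inner_diff_right inner_commute field_simps)
  have "F c - m / 2 * (norm c)\<^sup>2
      \<le> (F a - m / 2 * (norm a)\<^sup>2) / 2 + (F b - m / 2 * (norm b)\<^sup>2) / 2"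
    using convex_onD[OF assms(1)[unfolded strongly_convex_on_def], of "1/2" a b] assms(2,3)
    by (simp add: c_def scaleR_add_right)
  then show ?thesis
    unfolding c_def[symmetric] norm_c by (simp add: field_simps)
qed

text \<open>The midpoint argument gives the constant m/4 instead of the sharp m/2, which is enough here.\<close>
lemma strongly_convex_on_minimizer_growth:
  assumes "strongly_convex_on D m F" "w \<in> D" "\<forall>x\<in>D. F w \<le> F x" "v \<in> D"
  shows "m * (norm (v - w))\<^sup>2 / 4 \<le> F v - F w"
proof -
  have "convex D"
    using assms(1) unfolding strongly_convex_on_def by (rule convex_on_imp_convex)
  then have "(1/2) *\<^sub>R (w + v) \<in> D"
    using assms(2,4) by (simp add: convex_def scaleR_add_right)
  then have "F w \<le> F ((1/2) *\<^sub>R (w + v))"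
    using assms(3) by blast
  also have "\<dots> \<le> (F w + F v) / 2 - m * (norm (v - w))\<^sup>2 / 8"
    using assms(1,2,4) by (rule strongly_convex_on_midpoint)
  finally show ?thesis by argo
qed

lemma strongly_convex_minimizer_perturbation:
  assumes "strongly_convex_on D m F0" "0 < m" "0 \<le> L"
    and "w0 \<in> D" "\<forall>x\<in>D. F0 w0 \<le> F0 x" "w1 \<in> D" "\<forall>x\<in>D. F1 w1 \<le> F1 x"
    and "(F1 w0 - F0 w0) - (F1 w1 - F0 w1) \<le> L * norm (w1 - w0)"
  shows "norm (w1 - w0) \<le> 4 * L / m"
proof -
  have "m * (norm (w1 - w0))\<^sup>2 / 4 \<le> F0 w1 - F0 w0"
    using assms(1,4,5,6) by (rule strongly_convex_on_minimizer_growth)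
  also have "\<dots> \<le> L * norm (w1 - w0)"
    using assms(7,8,4) by fastforce
  finally have "norm (w1 - w0) * (m * norm (w1 - w0)) \<le> norm (w1 - w0) * (4 * L)"
    by (simp add: power2_eq_square algebra_simps)
  then consider "norm (w1 - w0) = 0" | "m * norm (w1 - w0) \<le> 4 * L"
    by (auto simp: mult_le_cancel_left)
  then show ?thesis
  proof cases
    case 1
    then show ?thesis using assms(2,3) by simp
  next
    case 2
    then show ?thesis using assms(2) by (simp add: field_simps)
  qed
qed

lemma quadratic_form_convex_combination:
  fixes A :: "real^'n^'n"
  shows "((1 - t) *\<^sub>R x + t *\<^sub>R y) \<bullet> (A *v ((1 - t) *\<^sub>R x + t *\<^sub>R y))
    = (1 - t) * (x \<bullet> (A *v x)) + t * (y \<bullet> (A *v y)) - t * (1 - t) * ((x - y) \<bullet> (A *v (x - y)))"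
  by (simp add: matrix_vector_right_distrib matrix_vector_mult_scaleR matrix_vector_mult_diff_distrib
      inner_add_left inner_add_right inner_diff_left inner_diff_right algebra_simps)

lemma convex_on_quadratic_form:
  fixes A :: "real^'n^'n"
  assumes "psd_ge A 0"
  shows "convex_on UNIV (\<lambda>x. x \<bullet> (A *v x))"
proof (rule convex_onI)
  fix t :: real and x y :: "real^'n"
  assume "0 < t" "t < 1"
  moreover have "0 \<le> (x - y) \<bullet> (A *v (x - y))"
    using assms unfolding psd_ge_def by simp
  ultimately show "((1 - t) *\<^sub>R x + t *\<^sub>R y) \<bullet> (A *v ((1 - t) *\<^sub>R x + t *\<^sub>R y))
      \<le> (1 - t) * (x \<bullet> (A *v x)) + t * (y \<bullet> (A *v y))"
    unfolding quadratic_form_convex_combination by simp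
qed simp

lemma psd_ge_shift: "psd_ge A c \<longleftrightarrow> psd_ge (A - c *\<^sub>R mat 1) 0"
  by (simp add: psd_ge_def matrix_vector_mult_diff_rdistrib inner_diff_right
      flip: scaleR_matrix_vector_assoc)

lemma psd_ge_mono: "psd_ge A c \<Longrightarrow> c' \<le> c \<Longrightarrow> psd_ge A c'"
  unfolding psd_ge_def by (meson inner_ge_zero mult_right_mono order_trans)

lemma strongly_convex_on_quadratic_form:
  fixes A :: "real^'n^'n"
  assumes "psd_ge A c"
  shows "strongly_convex_on UNIV (2 * c) (\<lambda>x. x \<bullet> (A *v x))"
proof -
  have "convex_on UNIV (\<lambda>x. x \<bullet> ((A - c *\<^sub>R mat 1) *v x))"
    using assms by (intro convex_on_quadratic_form) (simp flip: psd_ge_shift)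
  then show ?thesis
    unfolding strongly_convex_on_def
    by (simp add: matrix_vector_mult_diff_rdistrib inner_diff_right power2_norm_eq_inner
        flip: scaleR_matrix_vector_assoc)
qed

lemma sym_mat_add: "sym_mat A \<Longrightarrow> sym_mat B \<Longrightarrow> sym_mat (A + B)"
  unfolding sym_mat_def by (simp add: vec_eq_iff transpose_def)

lemma quadratic_form_diff:
  fixes A :: "real^'n^'n"
  assumes "sym_mat A"
  shows "x \<bullet> (A *v x) - y \<bullet> (A *v y) = (x - y) \<bullet> (A *v (x + y))"
proof -
  have "y \<bullet> (A *v x) = (y v* A) \<bullet> x"
    by (simp add: dot_lmul_matrix)
  also have "\<dots> = x \<bullet> (A *v y)"
    using assms unfolding sym_mat_def by (metis inner_commute vector_transpose_matrix)
  finally show ?thesis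
    by (simp add: matrix_vector_right_distrib inner_add_right inner_diff_left)
qed

lemma op_norm_nonneg: "0 \<le> op_norm A"
  unfolding op_norm_def by (rule onorm_pos_le) simp

lemma inner_matrix_vector_le_op_norm:
  "x \<bullet> (A *v y) \<le> norm x * (op_norm A * norm y)"
proof -
  have "x \<bullet> (A *v y) \<le> norm x * norm (A *v y)"
    by (rule norm_cauchy_schwarz)
  also have "norm (A *v y) \<le> op_norm A * norm y"
    unfolding op_norm_def by (rule onorm) simp
  finally show ?thesis
    by (simp add: mult_left_mono)
qed

lemma convex_feasible_set: "convex (feasible_set l u wprev tau)"
proof (rule convexI)
  fix a b and s t :: real
  assume a: "a \<in> feasible_set l u wprev tau" and b: "b \<in> feasible_set l u wprev tau"
    and st: "0 \<le> s" "0 \<le> t" "s + t = 1"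
  let ?c = "s *\<^sub>R a + t *\<^sub>R b"
  have "(\<Sum>i\<in>UNIV. ?c $ i) = s * (\<Sum>i\<in>UNIV. a $ i) + t * (\<Sum>i\<in>UNIV. b $ i)"
    by (simp add: sum.distrib sum_distrib_left)
  then have budget: "(\<Sum>i\<in>UNIV. ?c $ i) = 1"
    using a b st unfolding feasible_set_def by simp
  have box: "l $ i \<le> ?c $ i \<and> ?c $ i \<le> u $ i" for i
  proof -
    have "l $ i \<le> a $ i" "a $ i \<le> u $ i" "l $ i \<le> b $ i" "b $ i \<le> u $ i"
      using a b unfolding feasible_set_def by auto
    then have "s * l $ i + t * l $ i \<le> s * a $ i + t * b $ i"
        "s * a $ i + t * b $ i \<le> s * u $ i + t * u $ i"
      using st by (simp_all add: add_mono mult_left_mono)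
    then have "(s + t) * l $ i \<le> ?c $ i" "?c $ i \<le> (s + t) * u $ i"
      by (simp_all add: distrib_right)
    then show ?thesis
      using st by simp
  qed
  have "\<bar>?c $ i - wprev $ i\<bar> \<le> s * \<bar>a $ i - wprev $ i\<bar> + t * \<bar>b $ i - wprev $ i\<bar>" for i
  proof -
    have "?c $ i - wprev $ i = s * (a $ i - wprev $ i) + t * (b $ i - wprev $ i)"
      using st by (simp add: algebra_simps flip: distrib_right)
    then show ?thesis
      using st by (simp add: abs_triangle_ineq[THEN order_trans] abs_mult)
  qed
  then have "(\<Sum>i\<in>UNIV. \<bar>?c $ i - wprev $ i\<bar>)
      \<le> s * (\<Sum>i\<in>UNIV. \<bar>a $ i - wprev $ i\<bar>) + t * (\<Sum>i\<in>UNIV. \<bar>b $ i - wprev $ i\<bar>)"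
    unfolding sum_distrib_left sum.distrib[symmetric] by (rule sum_mono)
  also have "\<dots> \<le> s * tau + t * tau"
    using a b st unfolding feasible_set_def by (intro add_mono mult_left_mono) auto
  finally show "?c \<in> feasible_set l u wprev tau"
    using budget box st unfolding feasible_set_def by (simp add: algebra_simps flip: distrib_right)
qed

lemma norm_le_of_mem_feasible_set:
  assumes "w \<in> feasible_set l u wprev tau"
  shows "norm w \<le> (\<Sum>i\<in>UNIV. \<bar>l $ i\<bar> + \<bar>u $ i\<bar>)"
proof -
  have "norm w \<le> (\<Sum>i\<in>UNIV. \<bar>w $ i\<bar>)"
    by (rule norm_le_l1_cart)
  also have "\<dots> \<le> (\<Sum>i\<in>UNIV. \<bar>l $ i\<bar> + \<bar>u $ i\<bar>)"
  proof (rule sum_mono)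
    fix i
    have "l $ i \<le> w $ i" "w $ i \<le> u $ i"
      using assms unfolding feasible_set_def by auto
    then show "\<bar>w $ i\<bar> \<le> \<bar>l $ i\<bar> + \<bar>u $ i\<bar>"
      by arith
  qed
  finally show ?thesis .
qed

lemma convex_on_pos_part: "convex_on UNIV pos_part"
proof (rule convex_onI)
  fix t x y :: real
  assume "0 < t" "t < 1"
  then show "pos_part ((1 - t) *\<^sub>R x + t *\<^sub>R y) \<le> (1 - t) * pos_part x + t * pos_part y"
    unfolding pos_part_def
    by (auto intro!: max.boundedI add_mono mult_left_mono add_nonneg_nonneg mult_nonneg_nonneg)
qed simp

lemma convex_on_partial_INF:
  fixes \<phi> :: "'a::real_vector \<times> 'b::real_vector \<Rightarrow> real"
  assumes "convex_on UNIV \<phi>" "\<And>x. bdd_below (range (\<lambda>z. \<phi> (x, z)))"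
  shows "convex_on UNIV (\<lambda>x. INF z. \<phi> (x, z))"
proof -
  define f where "f = (\<lambda>x. INF z. \<phi> (x, z))"
  have f_le: "f x \<le> \<phi> (x, z)" for x z
    unfolding f_def by (rule cINF_lower[OF assms(2)]) simp
  have f_ge: "c \<le> f x" if "\<And>z. c \<le> \<phi> (x, z)" for c x
    unfolding f_def using that by (intro cINF_greatest) auto
  have "convex_on UNIV f"
  proof (rule convex_onI)
    fix t :: real and x y :: 'a
    assume t: "0 < t" "t < 1"
    let ?m = "(1 - t) *\<^sub>R x + t *\<^sub>R y"
    have joint: "f ?m \<le> (1 - t) * \<phi> (x, z1) + t * \<phi> (y, z2)" for z1 z2
    proof -
      have "f ?m \<le> \<phi> (?m, (1 - t) *\<^sub>R z1 + t *\<^sub>R z2)"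
        by (rule f_le)
      also have "\<dots> = \<phi> ((1 - t) *\<^sub>R (x, z1) + t *\<^sub>R (y, z2))"
        by simp
      also have "\<dots> \<le> (1 - t) * \<phi> (x, z1) + t * \<phi> (y, z2)"
        using convex_onD[OF assms(1), of t "(x, z1)" "(y, z2)"] t by simp
      finally show ?thesis .
    qed
    have "(f ?m - t * \<phi> (y, z2)) / (1 - t) \<le> f x" for z2
      by (rule f_ge) (use joint t in \<open>simp add: field_simps\<close>)
    then have "(f ?m - (1 - t) * f x) / t \<le> f y"
      by (intro f_ge) (use t in \<open>simp add: field_simps\<close>)
    then show "f ?m \<le> (1 - t) * f x + t * f y"
      using t by (simp add: field_simps)
  qed simp
  then show ?thesis
    unfolding f_def .
qed

lemma bdd_below_plus_scaled_excess:
  fixes a :: "'i \<Rightarrow> real"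
  assumes "finite I" "0 \<le> c" "1 \<le> c * real (card I)"
  shows "bdd_below (range (\<lambda>z. z + c * (\<Sum>i\<in>I. pos_part (a i - z))))"
proof (rule bdd_belowI2)
  fix z
  have excess_ge: "(\<Sum>i\<in>I. a i) - real (card I) * z \<le> (\<Sum>i\<in>I. pos_part (a i - z))"
    using sum_mono[of I "\<lambda>i. a i - z" "\<lambda>i. pos_part (a i - z)"]
    by (simp add: pos_part_def sum_subtractf)
  show "min 0 (c * (\<Sum>i\<in>I. a i)) \<le> z + c * (\<Sum>i\<in>I. pos_part (a i - z))"
  proof (cases "0 \<le> z")
    case True
    have "0 \<le> (\<Sum>i\<in>I. pos_part (a i - z))"
      by (simp add: pos_part_def sum_nonneg)
    then show ?thesis
      using True assms(2) by (simp add: min_le_iff_disj)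
  next
    case False
    have "c * ((\<Sum>i\<in>I. a i) - real (card I) * z) \<le> c * (\<Sum>i\<in>I. pos_part (a i - z))"
      using excess_ge assms(2) by (rule mult_left_mono)
    moreover have "0 \<le> z * (1 - c * real (card I))"
      using False assms(3) by (intro mult_nonpos_nonpos) auto
    ultimately show ?thesis
      by (simp add: algebra_simps min_le_iff_disj)
  qed
qed

definition rockafellar_uryasev :: "real \<Rightarrow> ('n::finite \<Rightarrow> real^'d) \<Rightarrow> (real^'d) \<times> real \<Rightarrow> real" where
  "rockafellar_uryasev alpha r = (\<lambda>(w, zeta). zeta + (1 / ((1 - alpha) * real CARD('n))) *
     (\<Sum>i\<in>UNIV. pos_part (- (w \<bullet> r i) - zeta)))"

lemma convex_on_rockafellar_uryasev:
  fixes r :: "'n::finite \<Rightarrow> real^'d"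
  assumes "alpha < 1"
  shows "convex_on UNIV (rockafellar_uryasev alpha r)"
proof (rule convex_onI)
  fix t :: real and p q :: "(real^'d) \<times> real"
  assume t: "0 < t" "t < 1"
  obtain w z v y where pq: "p = (w, z)" "q = (v, y)"
    by (cases p, cases q) auto
  define c where "c = 1 / ((1 - alpha) * real CARD('n))"
  define S where "S w' z' = (\<Sum>i\<in>UNIV. pos_part (- (w' \<bullet> r i) - z'))" for w' z'
  have ru: "rockafellar_uryasev alpha r (w', z') = z' + c * S w' z'" for w' z'
    by (simp add: rockafellar_uryasev_def c_def S_def)
  have "pos_part (- (((1 - t) *\<^sub>R w + t *\<^sub>R v) \<bullet> r i) - ((1 - t) * z + t * y))
      \<le> (1 - t) * pos_part (- (w \<bullet> r i) - z) + t * pos_part (- (v \<bullet> r i) - y)" for i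
    using convex_onD[OF convex_on_pos_part, of t "- (w \<bullet> r i) - z" "- (v \<bullet> r i) - y"] t
    by (simp add: inner_add_left algebra_simps)
  then have "S ((1 - t) *\<^sub>R w + t *\<^sub>R v) ((1 - t) * z + t * y) \<le> (1 - t) * S w z + t * S v y"
    unfolding S_def sum_distrib_left sum.distrib[symmetric] by (rule sum_mono)
  moreover have "0 \<le> c"
    using assms by (simp add: c_def)
  ultimately have "c * S ((1 - t) *\<^sub>R w + t *\<^sub>R v) ((1 - t) * z + t * y)
      \<le> (1 - t) * (c * S w z) + t * (c * S v y)"
    by (metis distrib_left mult.left_commute mult_left_mono)
  then show "rockafellar_uryasev alpha r ((1 - t) *\<^sub>R p + t *\<^sub>R q)
      \<le> (1 - t) * rockafellar_uryasev alpha r p + t * rockafellar_uryasev alpha r q"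
    unfolding pq by (simp add: ru algebra_simps)
qed simp

lemma convex_on_cvar_term:
  fixes r :: "'n::finite \<Rightarrow> real^'d"
  assumes "0 \<le> alpha" "alpha < 1"
  shows "convex_on UNIV (cvar_term alpha r)"
proof -
  have bdd: "bdd_below (range (\<lambda>zeta. rockafellar_uryasev alpha r (w, zeta)))" for w
  proof -
    have "1 \<le> 1 / ((1 - alpha) * real CARD('n)) * real (card (UNIV :: 'n set))"
      using assms by (simp add: field_simps)
    then show ?thesis
      using bdd_below_plus_scaled_excess[of "UNIV :: 'n set" "1 / ((1 - alpha) * real CARD('n))"
          "\<lambda>i. - (w \<bullet> r i)"] assms
      by (simp add: rockafellar_uryasev_def)
  qed
  have "cvar_term alpha r = (\<lambda>w. INF zeta. rockafellar_uryasev alpha r (w, zeta))"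
    by (simp add: fun_eq_iff cvar_term_def rockafellar_uryasev_def)
  then show ?thesis
    using convex_on_partial_INF[OF convex_on_rockafellar_uryasev[OF assms(2)] bdd] by simp
qed

lemma strongly_convex_on_objF:
  fixes r :: "'n::finite \<Rightarrow> real^'d"
  assumes "0 \<le> alpha" "alpha < 1" "0 \<le> gamma" "psd_ge S c"
  shows "strongly_convex_on UNIV (2 * gamma * c) (objF lam_mu gamma alpha r mu S)"
proof -
  have "strongly_convex_on UNIV (gamma * (2 * c)) (\<lambda>w. gamma * (w \<bullet> (S *v w)))"
    using assms(3) strongly_convex_on_quadratic_form[OF assms(4)] by (rule strongly_convex_on_cmul)
  moreover have "convex_on UNIV (\<lambda>w. - lam_mu * (mu \<bullet> w) + cvar_term alpha r w)"
  proof (rule convex_on_add)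
    show "convex_on UNIV (\<lambda>w. - lam_mu * (mu \<bullet> w))"
      by (rule convex_onI) (simp_all add: inner_add_right algebra_simps)
  qed (rule convex_on_cvar_term[OF assms(1,2)])
  ultimately have "strongly_convex_on UNIV (gamma * (2 * c))
      (\<lambda>w. gamma * (w \<bullet> (S *v w)) + (- lam_mu * (mu \<bullet> w) + cvar_term alpha r w))"
    by (rule strongly_convex_on_add_convex)
  moreover have "objF lam_mu gamma alpha r mu S
      = (\<lambda>w. gamma * (w \<bullet> (S *v w)) + (- lam_mu * (mu \<bullet> w) + cvar_term alpha r w))"
    by (simp add: fun_eq_iff objF_def)
  ultimately show ?thesis
    by (simp add: mult.assoc mult.left_commute)
qed

lemma objF_perturbation_bound:
  assumes "sym_mat dS" "0 \<le> lam_mu" "0 \<le> gamma" "norm v \<le> B" "norm w \<le> B"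
  shows "(objF lam_mu gamma alpha r (mu + dmu) (S + dS) v - objF lam_mu gamma alpha r mu S v)
       - (objF lam_mu gamma alpha r (mu + dmu) (S + dS) w - objF lam_mu gamma alpha r mu S w)
     \<le> (lam_mu * norm dmu + 2 * gamma * B * op_norm dS) * norm (w - v)"
proof -
  have perturbation: "objF lam_mu gamma alpha r (mu + dmu) (S + dS) x - objF lam_mu gamma alpha r mu S x
      = - lam_mu * (dmu \<bullet> x) + gamma * (x \<bullet> (dS *v x))" for x
    by (simp add: objF_def matrix_vector_mult_add_rdistrib inner_add_left inner_add_right algebra_simps)
  have mean_part: "dmu \<bullet> (w - v) \<le> norm dmu * norm (w - v)"
    by (rule norm_cauchy_schwarz)
  have "v \<bullet> (dS *v v) - w \<bullet> (dS *v w) = (v - w) \<bullet> (dS *v (v + w))"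
    using assms(1) by (rule quadratic_form_diff)
  also have "\<dots> \<le> norm (v - w) * (op_norm dS * norm (v + w))"
    by (rule inner_matrix_vector_le_op_norm)
  also have "\<dots> \<le> norm (w - v) * (op_norm dS * (2 * B))"
    using norm_triangle_ineq[of v w] assms(4,5)
    by (simp add: norm_minus_commute mult_left_mono op_norm_nonneg)
  finally have covariance_part: "v \<bullet> (dS *v v) - w \<bullet> (dS *v w) \<le> norm (w - v) * (op_norm dS * (2 * B))" .
  have "(objF lam_mu gamma alpha r (mu + dmu) (S + dS) v - objF lam_mu gamma alpha r mu S v)
       - (objF lam_mu gamma alpha r (mu + dmu) (S + dS) w - objF lam_mu gamma alpha r mu S w)
     = lam_mu * (dmu \<bullet> (w - v)) + gamma * (v \<bullet> (dS *v v) - w \<bullet> (dS *v w))"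
    unfolding perturbation by (simp add: inner_diff_right algebra_simps)
  also have "\<dots> \<le> lam_mu * (norm dmu * norm (w - v)) + gamma * (norm (w - v) * (op_norm dS * (2 * B)))"
    using mean_part covariance_part assms(2,3) by (intro add_mono mult_left_mono)
  also have "\<dots> = (lam_mu * norm dmu + 2 * gamma * B * op_norm dS) * norm (w - v)"
    by (simp add: algebra_simps)
  finally show ?thesis .
qed

lemma objF_minimizer_stability:
  fixes r :: "'n::finite \<Rightarrow> real^'d" and l u wprev :: "real^'d" and tau :: real
  defines "D \<equiv> feasible_set l u wprev tau"
    and "B \<equiv> \<Sum>i\<in>UNIV. \<bar>l $ i\<bar> + \<bar>u $ i\<bar>"
  assumes alpha: "0 \<le> alpha" "alpha < 1" and lam_mu: "0 \<le> lam_mu" and gamma: "0 < gamma"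
    and c: "0 < c" "psd_ge S c" and dS: "sym_mat dS"
    and min0: "is_minimizer_on (objF lam_mu gamma alpha r mu S) D w0"
    and min1: "is_minimizer_on (objF lam_mu gamma alpha r (mu + dmu) (S + dS)) D w1"
  shows "norm (w1 - w0) \<le> ((2 * lam_mu / gamma) * norm dmu + (4 * B) * op_norm dS) / c"
proof -
  let ?L = "lam_mu * norm dmu + 2 * gamma * B * op_norm dS"
  have strong: "strongly_convex_on D (2 * gamma * c) (objF lam_mu gamma alpha r mu S)"
    using alpha gamma c unfolding D_def
    by (intro strongly_convex_on_subset[OF strongly_convex_on_objF subset_UNIV convex_feasible_set])
      simp_all
  have "norm w0 \<le> B" "norm w1 \<le> B"
    using min0 min1 norm_le_of_mem_feasible_set[of _ l u wprev tau]
    unfolding is_minimizer_on_def D_def B_def by blast+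
  then have "(objF lam_mu gamma alpha r (mu + dmu) (S + dS) w0 - objF lam_mu gamma alpha r mu S w0)
      - (objF lam_mu gamma alpha r (mu + dmu) (S + dS) w1 - objF lam_mu gamma alpha r mu S w1)
      \<le> ?L * norm (w1 - w0)"
    using dS lam_mu gamma by (intro objF_perturbation_bound) simp_all
  moreover have "0 \<le> B"
    unfolding B_def by (intro sum_nonneg) auto
  then have "0 \<le> ?L"
    using lam_mu gamma op_norm_nonneg[of dS] by simp
  ultimately have "norm (w1 - w0) \<le> 4 * ?L / (2 * gamma * c)"
    using min0 min1 gamma c unfolding is_minimizer_on_def
    by (intro strongly_convex_minimizer_perturbation[OF strong]) simp_all
  also have "\<dots> = ((2 * lam_mu / gamma) * norm dmu + (4 * B) * op_norm dS) / c"
    using gamma c by (simp add: field_simps)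
  finally show ?thesis .
qed

theorem mainTheorem4:
  fixes r :: "'n::finite \<Rightarrow> real^'d"
    and alpha lam_mu gamma tau lam_min :: real
    and l u wprev mu0 :: "real^'d"
    and Sigma0 :: "real^'d^'d"
    and what :: "real^'d \<Rightarrow> real^'d^'d \<Rightarrow> real^'d"
  assumes "0 < alpha" "alpha < 1" "0 \<le> lam_mu" "0 < gamma"
    and "\<forall>i. l $ i \<le> u $ i" "0 \<le> tau"
    and "feasible_set l u wprev tau \<noteq> {}"
    and "\<forall>mu S. sym_mat S \<and> psd_ge S 0 \<longrightarrow>
           is_minimizer_on (objF lam_mu gamma alpha r mu S)
             (feasible_set l u wprev tau) (what mu S)"
    and "sym_mat Sigma0" "0 < lam_min" "psd_ge Sigma0 lam_min"
  shows "\<exists>c_mu c_Sigma. 0 \<le> c_mu \<and> 0 \<le> c_Sigma \<and>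
    (\<forall>dmu dSigma. sym_mat dSigma \<and> psd_ge (Sigma0 + dSigma) 0 \<longrightarrow>
       norm (what (mu0 + dmu) (Sigma0 + dSigma) - what mu0 Sigma0)
         \<le> (c_mu * norm dmu + c_Sigma * op_norm dSigma) / lam_min)"
proof -
  txt \<open>The hypotheses on l, u, tau and nonemptiness of the feasible set only guarantee that
    minimizers exist; their existence is assumed directly.\<close>
  define B where "B = (\<Sum>i\<in>UNIV. \<bar>l $ i\<bar> + \<bar>u $ i\<bar>)"
  have minimizer: "is_minimizer_on (objF lam_mu gamma alpha r mu S) (feasible_set l u wprev tau) (what mu S)"
    if "sym_mat S" "psd_ge S 0" for mu S
    using assms(8) that by blast
  have "psd_ge Sigma0 0"
    using psd_ge_mono[OF assms(11)] assms(10) by simp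
  then have "norm (what (mu0 + dmu) (Sigma0 + dSigma) - what mu0 Sigma0)
      \<le> ((2 * lam_mu / gamma) * norm dmu + (4 * B) * op_norm dSigma) / lam_min"
    if "sym_mat dSigma" "psd_ge (Sigma0 + dSigma) 0" for dmu dSigma
    unfolding B_def using assms(1)
    by (intro objF_minimizer_stability[OF _ assms(2-4,10,11) that(1)
          minimizer[OF assms(9) \<open>psd_ge Sigma0 0\<close>] minimizer[OF sym_mat_add[OF assms(9) that(1)] that(2)]])
      simp
  moreover have "0 \<le> 2 * lam_mu / gamma" "0 \<le> 4 * B"
    using assms(3,4) unfolding B_def by (auto intro: sum_nonneg)
  ultimately show ?thesis
    by blast
qed

end
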